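(* Let $n=3^27^2=441$ and let $\mathcal{D}_{S_1},\mathcal{D}_{S_2}\subseteq\mathcal{D}_{[441]}\setminus\{441\}$ be such that $\mathcal{D}_{S_1}\setminus\mathcal{D}_{S_2}=\{3\}$, $\mathcal{D}_{S_2}\setminus\mathcal{D}_{S_1}=\{9,7,49\}$, and $1\in\mathcal{D}_{S_1}\cap\mathcal{D}_{S_2}$. Then $\mathrm{Spec}(\mathrm{ICG}(441,\mathcal{D}_{S_1}))\neq\mathrm{Spec}(\mathrm{ICG}(441,\mathcal{D}_{S_2}))$.
   Context: Identify $\mathbb{Z}_n$ with $[n]=\{1,\dots,n\}$. For a divisor $d$ of $n$, $G_n(d)=\{j\in[n]:\gcd(j,n)=d\}$; $\mathcal{D}_{[n]}$ is the set of positive divisors of $n$. For $\mathcal{D}\subseteq\mathcal{D}_{[n]}\setminus\{n\}$, $\mathrm{ICG}(n,\mathcal{D})=\mathrm{Cay}(\mathbb{Z}_n,S)$ with $S=\bigcup_{d\in\mathcal{D}}G_n(d)$, and $\mathcal{D}=\mathcal{D}_S$. $\mathrm{Spec}$ is the multiset of adjacency eigenvalues. *)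

theory Defs
  imports "Jordan_Normal_Form.Char_Poly" "HOL-Computational_Algebra.Fundamental_Theorem_Algebra"
begin

text \<open>Z_n is identified with [n] = {1..n}; the residue 0 is represented by n.\<close>

definition divisors_of :: "nat \<Rightarrow> nat set" where
  "divisors_of n = {d. 0 < d \<and> d dvd n}"

definition G :: "nat \<Rightarrow> nat \<Rightarrow> nat set" where
  "G n d = {j \<in> {1..n}. gcd j n = d}"

definition ICG_S :: "nat \<Rightarrow> nat set \<Rightarrow> nat set" where
  "ICG_S n D = (\<Union>d\<in>D. G n d)"

definition rep :: "nat \<Rightarrow> int \<Rightarrow> nat" where
  "rep n k = (if k mod int n = 0 then n else nat (k mod int n))"

text \<open>Adjacency matrix of Cay(Z_n, S); row/column index i < n stands for the element i+1 of [n].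
  x ~ y iff y - x \<in> S (mod n).\<close>
definition cay_adj :: "nat \<Rightarrow> nat set \<Rightarrow> complex mat" where
  "cay_adj n S = mat n n (\<lambda>(i, j). if rep n (int j - int i) \<in> S then 1 else 0)"

definition ICG_adj :: "nat \<Rightarrow> nat set \<Rightarrow> complex mat" where
  "ICG_adj n D = cay_adj n (ICG_S n D)"

definition Spec :: "complex mat \<Rightarrow> complex multiset" where
  "Spec A = proots (char_poly A)"

end

theory Submission
  imports Defs "Jordan_Normal_Form.Schur_Decomposition" "HOL-Number_Theory.Number_Theory"
begin

text \<open>
  Equal spectra give equal traces of \<open>A\<^sup>3\<close>, the sums of the cubed eigenvalues (by Schur
  triangularisation). For a Cayley graph on \<open>\<int>\<^sub>n\<close> this trace is \<open>n\<close> times the number of pairs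
  \<open>(x, y)\<close> with \<open>x\<close>, \<open>y\<close> and \<open>-(x + y)\<close> all in the connection set, and for \<open>ICG(n, D)\<close> membership
  only depends on the gcd with \<open>n\<close>. By the Chinese remainder theorem these counts factor over
  \<open>441 = 9 \<cdot> 49\<close>; modulo a prime power, multiplication by units preserves gcd classes, so the
  number of partners \<open>b\<close> of \<open>a\<close> only depends on the gcd class of \<open>a\<close>. What remains is a finite
  computation: whatever common divisors among 21, 63, 147 the two sets share, the count for
  \<open>D\<^sub>1\<close> exceeds the count for \<open>D\<^sub>2\<close> by 588.
\<close>

section \<open>Traces of matrix powers and the spectrum\<close>

definition trace :: "'a::semiring_0 mat \<Rightarrow> 'a" where
  "trace A = (\<Sum>i<dim_row A. A $$ (i, i))"

lemma index_mult_mat_sum: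
  assumes "A \<in> carrier_mat n m" "B \<in> carrier_mat m k" "i < n" "j < k"
  shows "(A * B) $$ (i, j) = (\<Sum>l<m. A $$ (i, l) * B $$ (l, j))"
  using assms by (simp add: scalar_prod_def lessThan_atLeast0)

lemma trace_mult_comm:
  fixes A B :: "'a::comm_semiring_0 mat"
  assumes "A \<in> carrier_mat n m" "B \<in> carrier_mat m n"
  shows "trace (A * B) = trace (B * A)"
proof -
  have "trace (A * B) = (\<Sum>i<n. (A * B) $$ (i, i))"
    using assms by (simp add: trace_def)
  also have "\<dots> = (\<Sum>i<n. \<Sum>k<m. A $$ (i, k) * B $$ (k, i))"
    using assms by (intro sum.cong refl index_mult_mat_sum) auto
  also have "\<dots> = (\<Sum>k<m. \<Sum>i<n. B $$ (k, i) * A $$ (i, k))"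
    by (subst sum.swap) (simp add: mult.commute)
  also have "\<dots> = (\<Sum>k<m. (B * A) $$ (k, k))"
    using assms by (intro sum.cong refl index_mult_mat_sum[symmetric]) auto
  also have "\<dots> = trace (B * A)"
    using assms by (simp add: trace_def)
  finally show ?thesis .
qed

lemma upper_triangular_mult:
  fixes A B :: "'a::semiring_0 mat"
  assumes A: "A \<in> carrier_mat n n" and B: "B \<in> carrier_mat n n"
    and "upper_triangular A" "upper_triangular B"
  shows "upper_triangular (A * B)"
    and "i < n \<Longrightarrow> (A * B) $$ (i, i) = A $$ (i, i) * B $$ (i, i)"
proof -
  have vanish: "A $$ (i, k) * B $$ (k, j) = 0" if "i < n" "k < n" "k \<noteq> i \<or> k \<noteq> j" "j \<le> i" for i j k
  proof (cases "k < i")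
    case True
    then show ?thesis using assms that upper_triangularD[of A k i] by simp
  next
    case False
    then have "j < k" using that by auto
    then show ?thesis using assms that upper_triangularD[of B j k] by simp
  qed
  have entry: "(A * B) $$ (i, j) = (\<Sum>k<n. A $$ (i, k) * B $$ (k, j))" if "i < n" "j < n" for i j
    using A B that by (rule index_mult_mat_sum)
  show "upper_triangular (A * B)"
  proof (rule upper_triangularI)
    fix i j assume "j < i" "i < dim_row (A * B)"
    with A B have "(A * B) $$ (i, j) = (\<Sum>k\<in>{..<n}. A $$ (i, k) * B $$ (k, j))"
      by (intro entry) auto
    also have "\<dots> = 0"
      using A \<open>j < i\<close> \<open>i < dim_row (A * B)\<close> by (intro sum.neutral) (auto intro: vanish)
    finally show "(A * B) $$ (i, j) = 0" .
  qed
  assume i: "i < n"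
  have "(A * B) $$ (i, i) = A $$ (i, i) * B $$ (i, i) + (\<Sum>k\<in>{..<n} - {i}. A $$ (i, k) * B $$ (k, i))"
    using i by (simp add: entry sum.remove)
  also have "(\<Sum>k\<in>{..<n} - {i}. A $$ (i, k) * B $$ (k, i)) = 0"
    using i by (intro sum.neutral) (auto simp: vanish)
  finally show "(A * B) $$ (i, i) = A $$ (i, i) * B $$ (i, i)" by simp
qed

lemma upper_triangular_pow_mat:
  fixes A :: "'a::semiring_1 mat"
  assumes A: "A \<in> carrier_mat n n" and ut: "upper_triangular A"
  shows "upper_triangular (A ^\<^sub>m k) \<and> (\<forall>i<n. (A ^\<^sub>m k) $$ (i, i) = A $$ (i, i) ^ k)"
proof (induction k)
  case (Suc k)
  with upper_triangular_mult[OF pow_carrier_mat[OF A] A _ ut] show ?case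
    by (auto simp: power_commutes)
qed (use A in auto)

lemma proots_prod_linear_factors: "proots (\<Prod>a\<leftarrow>as. [:- a, 1::'a::idom:]) = mset as"
proof (induction as)
  case (Cons a as)
  have "(\<Prod>b\<leftarrow>as. [:- b, 1::'a:]) \<noteq> 0" by (auto simp: prod_list_zero_iff)
  then have "proots ([:- a, 1:] * (\<Prod>b\<leftarrow>as. [:- b, 1::'a:])) = proots [:- a, 1::'a:] + mset as"
    by (subst proots_mult) (auto simp: Cons.IH)
  moreover have "proots [:- a, 1::'a:] = {#a#}" using proots_linear_factor[of "-a"] by simp
  ultimately show ?case by simp
qed simp

lemma trace_pow_mat_eq_sum_Spec:
  fixes A :: "complex mat"
  assumes A: "A \<in> carrier_mat n n"
  shows "trace (A ^\<^sub>m k) = (\<Sum>x\<in>#Spec A. x ^ k)"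
proof -
  obtain as where cA: "char_poly A = (\<Prod>a\<leftarrow>as. [:- a, 1:])"
    using char_poly_factorized[OF A] by auto
  obtain B P Q where "schur_decomposition A as = (B, P, Q)"
    by (cases "schur_decomposition A as") auto
  from schur_decomposition[OF A cA this] have sim: "similar_mat_wit A B P Q"
    and ut: "upper_triangular B" and diag: "diag_mat B = as" by auto
  from sim A have B: "B \<in> carrier_mat n n" and P: "P \<in> carrier_mat n n" and Q: "Q \<in> carrier_mat n n"
    and QP: "Q * P = 1\<^sub>m n"
    by (auto simp: similar_mat_wit_def Let_def)
  have Bk: "B ^\<^sub>m k \<in> carrier_mat n n" using B by simp
  have "trace (A ^\<^sub>m k) = trace (P * B ^\<^sub>m k * Q)"
    by (simp add: similar_mat_wit_pow_id[OF sim])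
  also have "\<dots> = trace (Q * (P * B ^\<^sub>m k))"
    using P Q Bk by (intro trace_mult_comm) auto
  also have "Q * (P * B ^\<^sub>m k) = B ^\<^sub>m k"
    using P Q Bk by (simp add: assoc_mult_mat[symmetric, of Q n n P n] QP left_mult_one_mat)
  also have "trace (B ^\<^sub>m k) = (\<Sum>i<n. B $$ (i, i) ^ k)"
    using upper_triangular_pow_mat[OF B ut] B by (simp add: trace_def)
  also have "\<dots> = (\<Sum>a\<leftarrow>as. a ^ k)"
    using diag B by (auto simp: diag_mat_def sum_list_sum_nth atLeast0LessThan)
  also have "\<dots> = (\<Sum>x\<in>#Spec A. x ^ k)"
    by (metis Spec_def cA proots_prod_linear_factors mset_map sum_mset_sum_list)
  finally show ?thesis .
qed

section \<open>Closed walks of length three in circulant graphs\<close>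

lemma sum_periodic_shift:
  fixes g :: "int \<Rightarrow> 'a::comm_monoid_add"
  assumes periodic: "\<And>k. g (k mod int n) = g k"
  shows "(\<Sum>j<n. g (int j + c)) = (\<Sum>j<n. g (int j))"
proof -
  define h where "h j = nat ((int j + c) mod int n)" for j
  have "inj_on h {..<n}"
  proof
    fix i j assume "i \<in> {..<n}" "j \<in> {..<n}" "h i = h j"
    then have "[int i + c = int j + c] (mod int n)"
      by (auto simp: h_def cong_def nat_eq_iff)
    then have "[int i = int j] (mod int n)"
      by (simp add: cong_add_rcancel)
    then show "i = j"
      using \<open>i \<in> {..<n}\<close> \<open>j \<in> {..<n}\<close> by (simp add: cong_def)
  qed
  moreover have "h ` {..<n} \<subseteq> {..<n}"
    by (auto simp: h_def nat_less_iff)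
  ultimately have image: "h ` {..<n} = {..<n}"
    by (intro endo_inj_surj) auto
  have "(\<Sum>j<n. g (int j + c)) = (\<Sum>j<n. g (int (h j)))"
    by (intro sum.cong refl) (simp add: h_def periodic)
  also have "\<dots> = (\<Sum>j\<in>h ` {..<n}. g (int j))"
    using sum.reindex[OF \<open>inj_on h {..<n}\<close>, of "\<lambda>j. g (int j)"] by (simp add: o_def)
  also have "\<dots> = (\<Sum>j<n. g (int j))"
    using image by simp
  finally show ?thesis .
qed

lemma sum_periodic_closed_walks:
  fixes \<chi> :: "int \<Rightarrow> 'a::comm_semiring_1"
  assumes periodic: "\<And>k. \<chi> (k mod int n) = \<chi> k"
  shows "(\<Sum>j<n. \<Sum>l<n. \<chi> (int j - c) * \<chi> (int l - int j) * \<chi> (c - int l))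
       = (\<Sum>x<n. \<Sum>y<n. \<chi> (int x) * \<chi> (int y) * \<chi> (- int x - int y))"
proof -
  define T where "T t = (\<Sum>y<n. \<chi> (int y) * \<chi> (t - int y))" for t
  have cong: "\<chi> a = \<chi> b" if "a mod int n = b mod int n" for a b
    using periodic[of a] periodic[of b] that by simp
  have \<chi>_diff: "\<chi> (t - k mod int n) = \<chi> (t - k)" "\<chi> (k mod int n - t) = \<chi> (k - t)" for t k
    by (rule cong, simp add: mod_diff_right_eq mod_diff_left_eq)+
  have T_neg: "T (- (k mod int n)) = T (- k)" for k
  proof -
    have "T (k mod int n) = T k" for k
      by (simp add: T_def \<chi>_diff)
    then show ?thesis
      by (metis mod_minus_eq)
  qed
  have inner: "(\<Sum>l<n. \<chi> (int l - int j) * \<chi> (c - int l)) = T (c - int j)" for j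
  proof -
    have "(\<Sum>l<n. \<chi> (int l - int j) * \<chi> (c - int l))
        = (\<Sum>l<n. (\<lambda>t. \<chi> t * \<chi> (c - int j - t)) (int l + - int j))"
      by (simp add: algebra_simps)
    also have "\<dots> = T (c - int j)"
      unfolding T_def by (rule sum_periodic_shift) (simp add: periodic \<chi>_diff)
    finally show ?thesis .
  qed
  have "(\<Sum>j<n. \<Sum>l<n. \<chi> (int j - c) * \<chi> (int l - int j) * \<chi> (c - int l))
      = (\<Sum>j<n. (\<lambda>t. \<chi> t * T (- t)) (int j + - c))"
    by (simp add: inner mult.assoc flip: sum_distrib_left)
  also have "\<dots> = (\<Sum>x<n. \<chi> (int x) * T (- int x))"
    by (rule sum_periodic_shift) (simp add: periodic T_neg)
  also have "\<dots> = (\<Sum>x<n. \<Sum>y<n. \<chi> (int x) * \<chi> (int y) * \<chi> (- int x - int y))"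
    by (simp add: T_def sum_distrib_left mult.assoc)
  finally show ?thesis .
qed

lemma trace_cube_circulant:
  fixes \<chi> :: "int \<Rightarrow> 'a::comm_semiring_1"
  assumes periodic: "\<And>k. \<chi> (k mod int n) = \<chi> k"
  shows "trace (mat n n (\<lambda>(i, j). \<chi> (int j - int i)) ^\<^sub>m 3)
       = of_nat n * (\<Sum>x<n. \<Sum>y<n. \<chi> (int x) * \<chi> (int y) * \<chi> (- int x - int y))"
proof -
  define M where "M = mat n n (\<lambda>(i, j). \<chi> (int j - int i))"
  have M: "M \<in> carrier_mat n n" by (simp add: M_def)
  have "(M ^\<^sub>m 3) $$ (i, i)
      = (\<Sum>j<n. \<Sum>l<n. \<chi> (int j - int i) * \<chi> (int l - int j) * \<chi> (int i - int l))" if "i < n" for i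
  proof -
    have M3: "M ^\<^sub>m 3 = M * (M * M)"
      using M by (simp add: numeral_3_eq_3 assoc_mult_mat[of M n n M n M n])
    have "(M ^\<^sub>m 3) $$ (i, i) = (\<Sum>j<n. M $$ (i, j) * (M * M) $$ (j, i))"
      unfolding M3 using that M by (intro index_mult_mat_sum) auto
    also have "\<dots> = (\<Sum>j<n. M $$ (i, j) * (\<Sum>l<n. M $$ (j, l) * M $$ (l, i)))"
      using that M by (intro sum.cong refl arg_cong2[where f = "(*)"] index_mult_mat_sum) auto
    also have "\<dots> = (\<Sum>j<n. \<Sum>l<n. \<chi> (int j - int i) * \<chi> (int l - int j) * \<chi> (int i - int l))"
      using that by (simp add: M_def sum_distrib_left mult.assoc)
    finally show ?thesis .
  qed
  then have "trace (M ^\<^sub>m 3)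
      = (\<Sum>i<n. \<Sum>x<n. \<Sum>y<n. \<chi> (int x) * \<chi> (int y) * \<chi> (- int x - int y))"
    using M by (simp add: trace_def sum_periodic_closed_walks[of \<chi> n, OF periodic])
  then show ?thesis
    by (simp add: M_def)
qed

definition gcd_triangles :: "nat \<Rightarrow> nat set \<Rightarrow> nat" where
  "gcd_triangles n D = (\<Sum>x<n. \<Sum>y<n. of_bool (gcd x n \<in> D \<and> gcd y n \<in> D \<and> gcd (x + y) n \<in> D))"

lemma gcd_rep:
  assumes "0 < n"
  shows "gcd (rep n k) n = nat (gcd k (int n))"
proof (cases "k mod int n = 0")
  case True
  then show ?thesis by (auto simp: rep_def)
next
  case False
  have "0 \<le> k mod int n"
    using assms by simp
  then have "int (gcd (nat (k mod int n)) n) = gcd (k mod int n) (int n)"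
    by (metis gcd_int_int_eq nat_0_le)
  also have "\<dots> = gcd k (int n)"
    using assms by (simp add: gcd_mod_left)
  finally show ?thesis
    using False by (simp add: rep_def)
qed

lemma rep_mem_ICG_S:
  assumes "0 < n"
  shows "rep n k \<in> ICG_S n D \<longleftrightarrow> nat (gcd k (int n)) \<in> D"
proof -
  have "rep n k \<in> {1..n}"
  proof (cases "k mod int n = 0")
    case False
    define z where "z = k mod int n"
    have "z \<noteq> 0" "0 \<le> z" "z < int n"
      using False assms by (simp_all add: z_def)
    then have "nat z \<in> {1..n}"
      by (simp add: nat_le_iff le_nat_iff)
    with False show ?thesis
      by (simp add: rep_def z_def)
  qed (use assms in \<open>simp add: rep_def\<close>)
  then show ?thesis
    by (auto simp: ICG_S_def G_def gcd_rep[OF assms])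
qed

lemma trace_cube_ICG_adj:
  assumes "0 < n"
  shows "trace (ICG_adj n D ^\<^sub>m 3) = of_nat (n * gcd_triangles n D)"
proof -
  define \<chi> :: "int \<Rightarrow> complex" where "\<chi> k = of_bool (nat (gcd k (int n)) \<in> D)" for k
  have adj: "ICG_adj n D = mat n n (\<lambda>(i, j). \<chi> (int j - int i))"
    by (auto simp: ICG_adj_def cay_adj_def \<chi>_def rep_mem_ICG_S[OF assms])
  have periodic: "\<chi> (k mod int n) = \<chi> k" for k
    using assms by (simp add: \<chi>_def gcd_mod_left)
  \<comment> \<open>gcd ignores signs, so the closing step \<open>-(x + y)\<close> is counted through \<open>x + y\<close>\<close>
  have triple: "\<chi> (int x) * \<chi> (int y) * \<chi> (- int x - int y)
      = of_bool (gcd x n \<in> D \<and> gcd y n \<in> D \<and> gcd (x + y) n \<in> D)" for x y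
  proof -
    have "- int x - int y = - int (x + y)" by simp
    then have "nat (gcd (- int x - int y) (int n)) = gcd (x + y) n"
      by (simp only: gcd_neg1_int gcd_int_int_eq nat_int)
    then show ?thesis by (simp add: \<chi>_def)
  qed
  have "trace (ICG_adj n D ^\<^sub>m 3)
      = of_nat n * (\<Sum>x<n. \<Sum>y<n. \<chi> (int x) * \<chi> (int y) * \<chi> (- int x - int y))"
    unfolding adj by (rule trace_cube_circulant) (rule periodic)
  also have "\<dots> = of_nat (n * gcd_triangles n D)"
    by (simp only: triple gcd_triangles_def of_nat_mult of_nat_sum of_nat_of_bool)
  finally show ?thesis .
qed

section \<open>Counting residues by gcd classes\<close>

definition gcd_pair_count :: "nat \<Rightarrow> nat \<Rightarrow> nat \<Rightarrow> nat \<Rightarrow> nat" where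
  "gcd_pair_count m u v w = (\<Sum>a<m. \<Sum>b<m. of_bool (gcd a m = u \<and> gcd b m = v \<and> gcd (a + b) m = w))"

lemma sum_of_bool_eq_mem:
  assumes "finite D"
  shows "(\<Sum>u\<in>D. of_bool (a = u)) = (of_bool (a \<in> D) :: 'a::comm_semiring_1)"
  using assms by (simp add: of_bool_def sum.delta)

lemma gcd_triangles_eq_sum_gcd_pair_count:
  assumes "finite D"
  shows "gcd_triangles n D = (\<Sum>u\<in>D. \<Sum>v\<in>D. \<Sum>w\<in>D. gcd_pair_count n u v w)"
proof -
  have indicator: "of_bool (gcd x n \<in> D \<and> gcd y n \<in> D \<and> gcd (x + y) n \<in> D)
      = (\<Sum>u\<in>D. \<Sum>v\<in>D. \<Sum>w\<in>D. of_bool (gcd x n = u \<and> gcd y n = v \<and> gcd (x + y) n = w) :: nat)" for x y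
    using assms by (simp add: of_bool_conj sum_of_bool_eq_mem flip: sum_distrib_left sum_distrib_right)
  show ?thesis
    unfolding gcd_triangles_def gcd_pair_count_def indicator
    by (simp only: sum.swap[where A = "{..<n}" and B = D])
qed

lemma gcd_mod_left_nat: "gcd (x mod m) m = gcd x (m::nat)"
  using gcd_red_nat[of x m] by (simp add: gcd.commute)

lemma gcd_add_mod_nat: "gcd (x mod m + y mod m) m = gcd (x + y) (m::nat)"
  by (metis gcd_mod_left_nat mod_add_eq)

lemma gcd_mult_coprime_right:
  fixes a m1 m2 :: nat
  assumes "coprime m1 m2"
  shows "gcd a (m1 * m2) = gcd a m1 * gcd a m2"
proof (rule dvd_antisym)
  have "coprime (gcd a m1) (gcd a m2)"
    by (rule coprime_divisors[OF _ _ assms]) simp_all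
  then show "gcd a m1 * gcd a m2 dvd gcd a (m1 * m2)"
    by (simp add: divides_mult mult_dvd_mono)
  obtain d1 d2 where d: "gcd a (m1 * m2) = d1 * d2" "d1 dvd m1" "d2 dvd m2"
    using division_decomp[of "gcd a (m1 * m2)" m1 m2] by auto
  have "d1 dvd a" "d2 dvd a"
    by (metis d(1) gcd_dvd1 dvd_mult_left dvd_mult_right)+
  with d show "gcd a (m1 * m2) dvd gcd a m1 * gcd a m2"
    by (simp add: mult_dvd_mono)
qed

lemma gcd_eq_iff_coprime_factors:
  fixes a u m1 m2 :: nat
  assumes "coprime m1 m2" "u dvd m1 * m2"
  shows "gcd a (m1 * m2) = u \<longleftrightarrow> gcd a m1 = gcd u m1 \<and> gcd a m2 = gcd u m2"
proof
  assume "gcd a (m1 * m2) = u"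
  moreover have "gcd (gcd a (m1 * m2)) m1 = gcd a m1" "gcd (gcd a (m1 * m2)) m2 = gcd a m2"
    by (simp_all add: gcd.assoc gcd_proj2_if_dvd_nat)
  ultimately show "gcd a m1 = gcd u m1 \<and> gcd a m2 = gcd u m2" by simp
next
  assume "gcd a m1 = gcd u m1 \<and> gcd a m2 = gcd u m2"
  then have "gcd a (m1 * m2) = gcd u (m1 * m2)"
    using assms(1) by (simp add: gcd_mult_coprime_right)
  then show "gcd a (m1 * m2) = u"
    using assms(2) by simp
qed

lemma sum_chinese_remainder:
  fixes H :: "nat \<Rightarrow> nat \<Rightarrow> 'a::comm_monoid_add"
  assumes "coprime m1 m2"
  shows "(\<Sum>x<m1 * m2. H (x mod m1) (x mod m2)) = (\<Sum>a<m1. \<Sum>b<m2. H a b)"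
proof -
  define \<phi> where "\<phi> x = (x mod m1, x mod m2)" for x
  have inj: "inj_on \<phi> {..<m1 * m2}"
  proof
    fix x y assume "x \<in> {..<m1 * m2}" "y \<in> {..<m1 * m2}" "\<phi> x = \<phi> y"
    then have "[x = y] (mod m1 * m2)"
      using assms by (intro coprime_cong_mult_nat) (auto simp: \<phi>_def cong_def)
    with \<open>x \<in> {..<m1 * m2}\<close> \<open>y \<in> {..<m1 * m2}\<close> show "x = y"
      by (simp add: cong_def)
  qed
  have "\<phi> ` {..<m1 * m2} \<subseteq> {..<m1} \<times> {..<m2}"
  proof
    fix p assume "p \<in> \<phi> ` {..<m1 * m2}"
    then obtain x where "x < m1 * m2" "p = \<phi> x" by auto
    from \<open>x < m1 * m2\<close> have "0 < m1 * m2" by (rule le_less_trans[OF le0])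
    with \<open>p = \<phi> x\<close> show "p \<in> {..<m1} \<times> {..<m2}" by (simp add: \<phi>_def)
  qed
  then have image: "\<phi> ` {..<m1 * m2} = {..<m1} \<times> {..<m2}"
    by (intro card_subset_eq) (simp_all add: card_image[OF inj])
  have "(\<Sum>x<m1 * m2. H (x mod m1) (x mod m2)) = (\<Sum>p\<in>\<phi> ` {..<m1 * m2}. case_prod H p)"
    by (subst sum.reindex[OF inj]) (simp add: \<phi>_def)
  also have "\<dots> = (\<Sum>a<m1. \<Sum>b<m2. H a b)"
    by (simp add: image sum.cartesian_product)
  finally show ?thesis .
qed

lemma gcd_pair_count_mult:
  assumes "coprime m1 m2" "u dvd m1 * m2" "v dvd m1 * m2" "w dvd m1 * m2"
  shows "gcd_pair_count (m1 * m2) u v w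
       = gcd_pair_count m1 (gcd u m1) (gcd v m1) (gcd w m1) * gcd_pair_count m2 (gcd u m2) (gcd v m2) (gcd w m2)"
proof -
  define P where "P m a b = (of_bool (gcd a m = gcd u m \<and> gcd b m = gcd v m \<and> gcd (a + b) m = gcd w m) :: nat)"
    for m a b
  have factor: "of_bool (gcd x (m1 * m2) = u \<and> gcd y (m1 * m2) = v \<and> gcd (x + y) (m1 * m2) = w)
      = P m1 (x mod m1) (y mod m1) * P m2 (x mod m2) (y mod m2)" for x y
    using assms by (simp add: P_def gcd_eq_iff_coprime_factors gcd_mod_left_nat gcd_add_mod_nat)
  have "gcd_pair_count (m1 * m2) u v w
      = (\<Sum>x<m1 * m2. \<Sum>y<m1 * m2. P m1 (x mod m1) (y mod m1) * P m2 (x mod m2) (y mod m2))"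
    by (simp add: gcd_pair_count_def factor)
  also have "\<dots> = (\<Sum>x<m1 * m2. \<Sum>a'<m1. \<Sum>b'<m2. P m1 (x mod m1) a' * P m2 (x mod m2) b')"
  proof (rule sum.cong[OF refl])
    fix x
    show "(\<Sum>y<m1 * m2. P m1 (x mod m1) (y mod m1) * P m2 (x mod m2) (y mod m2))
        = (\<Sum>a'<m1. \<Sum>b'<m2. P m1 (x mod m1) a' * P m2 (x mod m2) b')"
      using sum_chinese_remainder[OF assms(1), of "\<lambda>a' b'. P m1 (x mod m1) a' * P m2 (x mod m2) b'"] .
  qed
  also have "\<dots> = (\<Sum>a<m1. \<Sum>b<m2. \<Sum>a'<m1. \<Sum>b'<m2. P m1 a a' * P m2 b b')"
    using sum_chinese_remainder[OF assms(1), of "\<lambda>a b. \<Sum>a'<m1. \<Sum>b'<m2. P m1 a a' * P m2 b b'"] .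
  also have "\<dots> = (\<Sum>a<m1. \<Sum>a'<m1. P m1 a a') * (\<Sum>b<m2. \<Sum>b'<m2. P m2 b b')"
    by (simp only: sum_product)
  also have "\<dots> = gcd_pair_count m1 (gcd u m1) (gcd v m1) (gcd w m1) * gcd_pair_count m2 (gcd u m2) (gcd v m2) (gcd w m2)"
    by (simp add: gcd_pair_count_def P_def)
  finally show ?thesis .
qed

lemma gcd_triangles_mult:
  assumes "coprime m1 m2" "finite D" "\<And>d. d \<in> D \<Longrightarrow> d dvd m1 * m2"
  shows "gcd_triangles (m1 * m2) D = (\<Sum>u\<in>D. \<Sum>v\<in>D. \<Sum>w\<in>D.
    gcd_pair_count m1 (gcd u m1) (gcd v m1) (gcd w m1) * gcd_pair_count m2 (gcd u m2) (gcd v m2) (gcd w m2))"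
  using assms by (simp add: gcd_triangles_eq_sum_gcd_pair_count gcd_pair_count_mult)

definition gcd_class_size :: "nat \<Rightarrow> nat \<Rightarrow> nat" where
  "gcd_class_size m u = (\<Sum>a<m. of_bool (gcd a m = u))"

definition gcd_sum_count :: "nat \<Rightarrow> nat \<Rightarrow> nat \<Rightarrow> nat \<Rightarrow> nat" where
  "gcd_sum_count m a v w = (\<Sum>b<m. of_bool (gcd b m = v \<and> gcd (a + b) m = w))"

lemma sum_mult_coprime_mod:
  fixes g :: "nat \<Rightarrow> 'a::comm_monoid_add"
  assumes "coprime c m"
  shows "(\<Sum>j<m. g (c * j mod m)) = (\<Sum>j<m. g j)"
proof -
  define h where "h j = c * j mod m" for j
  have inj: "inj_on h {..<m}"
  proof
    fix i j assume "i \<in> {..<m}" "j \<in> {..<m}" "h i = h j"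
    then have "[c * i = c * j] (mod m)"
      by (simp add: h_def cong_def)
    then have "[i = j] (mod m)"
      using assms by (simp add: cong_mult_lcancel_nat)
    with \<open>i \<in> {..<m}\<close> \<open>j \<in> {..<m}\<close> show "i = j"
      by (simp add: cong_def)
  qed
  moreover have "h ` {..<m} \<subseteq> {..<m}"
    by (auto simp: h_def)
  ultimately have image: "h ` {..<m} = {..<m}"
    by (intro endo_inj_surj) auto
  have "(\<Sum>j<m. g (h j)) = (\<Sum>j\<in>h ` {..<m}. g j)"
    using sum.reindex[OF inj, of g] by (simp add: o_def)
  also have "\<dots> = (\<Sum>j<m. g j)"
    using image by simp
  finally show ?thesis
    by (simp add: h_def)
qed

lemma gcd_sum_count_mod: "gcd_sum_count m (a mod m) v w = gcd_sum_count m a v w"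
proof -
  have "gcd (a mod m + b) m = gcd (a + b) m" for b
    by (metis gcd_mod_left_nat mod_add_left_eq)
  then show ?thesis
    by (simp add: gcd_sum_count_def)
qed

lemma gcd_sum_count_mult_coprime:
  assumes "coprime c m"
  shows "gcd_sum_count m (c * a) v w = gcd_sum_count m a v w"
proof -
  have "gcd (c * b mod m) m = gcd b m" for b
    using assms by (simp add: gcd_mod_left_nat gcd_mult_left_left_cancel coprime_commute)
  moreover have "gcd (c * a + c * b mod m) m = gcd (a + b) m" for b
  proof -
    have "gcd (c * a + c * b mod m) m = gcd (c * (a + b)) m"
      by (metis gcd_mod_left_nat mod_add_right_eq distrib_left)
    also have "\<dots> = gcd (a + b) m"
      using assms by (simp add: gcd_mult_left_left_cancel coprime_commute)
    finally show ?thesis .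
  qed
  ultimately have "gcd_sum_count m a v w = (\<Sum>b<m. of_bool (gcd (c * b mod m) m = v \<and> gcd (c * a + c * b mod m) m = w))"
    by (simp add: gcd_sum_count_def)
  also have "\<dots> = gcd_sum_count m (c * a) v w"
    unfolding gcd_sum_count_def
    by (rule sum_mult_coprime_mod[OF assms, where g = "\<lambda>b. of_bool (gcd b m = v \<and> gcd (c * a + b) m = w)"])
  finally show ?thesis ..
qed

lemma prime_power_gcd_unit_multiple:
  fixes p a :: nat
  assumes "prime p"
  shows "\<exists>c. coprime c (p ^ k) \<and> [a = c * gcd a (p ^ k)] (mod p ^ k)"
proof (cases "p ^ k dvd a")
  case True
  then have "[a = 1 * gcd a (p ^ k)] (mod p ^ k)"
    by (simp add: cong_def)
  then show ?thesis
    using coprime_1_left by blast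
next
  case False
  define u where "u = gcd a (p ^ k)"
  have "u dvd p ^ k"
    by (simp add: u_def)
  then obtain j where j: "j \<le> k" "u = p ^ j"
    using divides_primepow_nat[OF assms] by blast
  have "u dvd a"
    by (simp add: u_def)
  then obtain c where a: "a = u * c" ..
  have "\<not> p dvd c"
  proof
    assume "p dvd c"
    then have "p ^ j * p dvd p ^ j * c"
      by (rule mult_dvd_mono[OF dvd_refl])
    then have "p ^ Suc j dvd a"
      by (simp only: a j(2) power_Suc2)
    moreover have "j \<noteq> k"
      using False a j by auto
    then have "p ^ Suc j dvd p ^ k"
      using j(1) by (intro le_imp_power_dvd) simp
    ultimately have "p ^ Suc j dvd u"
      unfolding u_def by (rule gcd_greatest)
    then have "p ^ Suc j dvd p ^ j"
      by (simp only: j(2))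
    then have "Suc j \<le> j"
      using prime_gt_1_nat[OF assms] by (rule power_dvd_imp_le)
    then show False by simp
  qed
  then have "coprime c (p ^ k)"
    using assms by (rule prime_imp_power_coprime_nat[rotated])
  moreover have "[a = c * u] (mod p ^ k)"
    by (simp add: a mult.commute)
  ultimately show ?thesis
    unfolding u_def by blast
qed

text \<open>
  Multiplication by a unit permutes the residues and preserves gcd classes, and modulo a prime
  power every residue is a unit multiple of its gcd with the modulus.
\<close>

lemma gcd_pair_count_prime_power:
  assumes "prime p"
  shows "gcd_pair_count (p ^ k) u v w = gcd_class_size (p ^ k) u * gcd_sum_count (p ^ k) u v w"
proof -
  let ?m = "p ^ k"
  have orbit: "gcd_sum_count ?m a v w = gcd_sum_count ?m u v w" if "gcd a ?m = u" for a
  proof -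
    obtain c where "coprime c ?m" "[a = c * gcd a ?m] (mod ?m)"
      using prime_power_gcd_unit_multiple[OF assms] by blast
    with that have "[a = c * u] (mod ?m)"
      by simp
    have "gcd_sum_count ?m a v w = gcd_sum_count ?m (a mod ?m) v w"
      by (simp only: gcd_sum_count_mod)
    also have "\<dots> = gcd_sum_count ?m (c * u mod ?m) v w"
      using \<open>[a = c * u] (mod ?m)\<close> by (simp only: cong_def)
    also have "\<dots> = gcd_sum_count ?m (c * u) v w"
      by (simp only: gcd_sum_count_mod)
    also have "\<dots> = gcd_sum_count ?m u v w"
      using \<open>coprime c ?m\<close> by (rule gcd_sum_count_mult_coprime)
    finally show ?thesis .
  qed
  have "gcd_pair_count ?m u v w = (\<Sum>a<?m. of_bool (gcd a ?m = u) * gcd_sum_count ?m a v w)"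
    unfolding gcd_pair_count_def gcd_sum_count_def sum_distrib_left by (simp only: of_bool_conj)
  also have "\<dots> = (\<Sum>a<?m. of_bool (gcd a ?m = u) * gcd_sum_count ?m u v w)"
  proof (rule sum.cong[OF refl])
    fix a
    show "of_bool (gcd a ?m = u) * gcd_sum_count ?m a v w = of_bool (gcd a ?m = u) * gcd_sum_count ?m u v w"
      using orbit[of a] by (cases "gcd a ?m = u") simp_all
  qed
  also have "\<dots> = gcd_class_size ?m u * gcd_sum_count ?m u v w"
    by (simp only: gcd_class_size_def sum_distrib_right)
  finally show ?thesis .
qed

section \<open>The case \<open>n = 441\<close>\<close>

lemma gcd_pair_count_9:
  "gcd_pair_count 9 1 1 1 = 18" "gcd_pair_count 9 1 1 3 = 12" "gcd_pair_count 9 1 1 9 = 6"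
  "gcd_pair_count 9 1 3 1 = 12" "gcd_pair_count 9 1 3 3 = 0"  "gcd_pair_count 9 1 3 9 = 0"
  "gcd_pair_count 9 1 9 1 = 6"  "gcd_pair_count 9 1 9 3 = 0"  "gcd_pair_count 9 1 9 9 = 0"
  "gcd_pair_count 9 3 1 1 = 12" "gcd_pair_count 9 3 1 3 = 0"  "gcd_pair_count 9 3 1 9 = 0"
  "gcd_pair_count 9 3 3 1 = 0"  "gcd_pair_count 9 3 3 3 = 2"  "gcd_pair_count 9 3 3 9 = 2"
  "gcd_pair_count 9 3 9 1 = 0"  "gcd_pair_count 9 3 9 3 = 2"  "gcd_pair_count 9 3 9 9 = 0"
  "gcd_pair_count 9 9 1 1 = 6"  "gcd_pair_count 9 9 1 3 = 0"  "gcd_pair_count 9 9 1 9 = 0"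
  "gcd_pair_count 9 9 3 1 = 0"  "gcd_pair_count 9 9 3 3 = 2"  "gcd_pair_count 9 9 3 9 = 0"
  "gcd_pair_count 9 9 9 1 = 0"  "gcd_pair_count 9 9 9 3 = 0"  "gcd_pair_count 9 9 9 9 = 1"
  unfolding gcd_pair_count_prime_power[of 3 2, simplified] by code_simp+

lemma gcd_pair_count_49:
  "gcd_pair_count 49 1 1 1 = 1470" "gcd_pair_count 49 1 1 7 = 252" "gcd_pair_count 49 1 1 49 = 42"
  "gcd_pair_count 49 1 7 1 = 252"  "gcd_pair_count 49 1 7 7 = 0"   "gcd_pair_count 49 1 7 49 = 0"
  "gcd_pair_count 49 1 49 1 = 42"  "gcd_pair_count 49 1 49 7 = 0"  "gcd_pair_count 49 1 49 49 = 0"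
  "gcd_pair_count 49 7 1 1 = 252"  "gcd_pair_count 49 7 1 7 = 0"   "gcd_pair_count 49 7 1 49 = 0"
  "gcd_pair_count 49 7 7 1 = 0"    "gcd_pair_count 49 7 7 7 = 30"  "gcd_pair_count 49 7 7 49 = 6"
  "gcd_pair_count 49 7 49 1 = 0"   "gcd_pair_count 49 7 49 7 = 6"  "gcd_pair_count 49 7 49 49 = 0"
  "gcd_pair_count 49 49 1 1 = 42"  "gcd_pair_count 49 49 1 7 = 0"  "gcd_pair_count 49 49 1 49 = 0"
  "gcd_pair_count 49 49 7 1 = 0"   "gcd_pair_count 49 49 7 7 = 6"  "gcd_pair_count 49 49 7 49 = 0"
  "gcd_pair_count 49 49 49 1 = 0"  "gcd_pair_count 49 49 49 7 = 0" "gcd_pair_count 49 49 49 49 = 1"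
  \<comment> \<open>the factorisation replaces a sum over \<open>49\<^sup>2\<close> pairs by two sums over \<open>49\<close> residues\<close>
  unfolding gcd_pair_count_prime_power[of 7 2, simplified] by code_simp+

lemma gcd_triangles_441:
  assumes "C \<subseteq> {21, 63, 147}"
  shows "gcd_triangles 441 ({1, 3} \<union> C) = gcd_triangles 441 ({1, 7, 9, 49} \<union> C) + 588"
proof -
  have "coprime (9::nat) 49" by code_simp
  moreover have "d dvd 9 * 49" if "d \<in> {1, 3, 7, 9, 21, 49, 63, 147}" for d :: nat
    using that by auto
  ultimately have expand: "gcd_triangles 441 D = (\<Sum>u\<in>D. \<Sum>v\<in>D. \<Sum>w\<in>D.
      gcd_pair_count 9 (gcd u 9) (gcd v 9) (gcd w 9) * gcd_pair_count 49 (gcd u 49) (gcd v 49) (gcd w 49))"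
    if "D \<subseteq> {1, 3, 7, 9, 21, 49, 63, 147}" for D
    using gcd_triangles_mult[of 9 49 D] that finite_subset[OF that] by (simp add: subset_iff)
  have gcds:
    "gcd (1::nat) 9 = 1" "gcd (3::nat) 9 = 3" "gcd (7::nat) 9 = 1" "gcd (9::nat) 9 = 9"
    "gcd (21::nat) 9 = 3" "gcd (49::nat) 9 = 1" "gcd (63::nat) 9 = 9" "gcd (147::nat) 9 = 3"
    "gcd (1::nat) 49 = 1" "gcd (3::nat) 49 = 1" "gcd (7::nat) 49 = 7" "gcd (9::nat) 49 = 1"
    "gcd (21::nat) 49 = 7" "gcd (49::nat) 49 = 49" "gcd (63::nat) 49 = 7" "gcd (147::nat) 49 = 49"
    by (simp_all add: gcd_non_0_nat)
  have "C \<in> Pow {21, 63, 147}"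
    using assms by simp
  then consider "C = {}" | "C = {21}" | "C = {63}" | "C = {147}" | "C = {21, 63}" | "C = {21, 147}"
    | "C = {63, 147}" | "C = {21, 63, 147}"
    by (simp add: Pow_insert) blast
  \<comment> \<open>\<open>One_nat_def\<close> would turn the numeral \<open>1\<close> into \<open>Suc 0\<close>, which the tables do not match\<close>
  then show ?thesis
    by cases (simp_all add: expand gcds gcd_pair_count_9 gcd_pair_count_49 del: One_nat_def)
qed

lemma divisors_of_441: "divisors_of 441 = {1, 3, 7, 9, 21, 49, 63, 147, 441}"
proof -
  have "divisors_of 441 = set (filter (\<lambda>d. d dvd 441) [1..<442])"
    unfolding divisors_of_def by (auto dest: dvd_imp_le)
  also have "filter (\<lambda>d. d dvd (441::nat)) [1..<442] = [1, 3, 7, 9, 21, 49, 63, 147, 441]"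
    by code_simp
  finally show ?thesis by simp
qed

lemma divisor_sets_441:
  assumes "D1 \<subseteq> divisors_of 441 - {441}" "D2 \<subseteq> divisors_of 441 - {441}"
    and "D1 - D2 = {3}" "D2 - D1 = {9, 7, 49}" "1 \<in> D1 \<inter> D2"
  obtains C where "C \<subseteq> {21, 63, 147}" "D1 = {1, 3} \<union> C" "D2 = {1, 7, 9, 49} \<union> C"
proof
  have "D1 \<subseteq> {1, 3, 7, 9, 21, 49, 63, 147}" "D2 \<subseteq> {1, 3, 7, 9, 21, 49, 63, 147}"
    using assms(1,2) by (auto simp: divisors_of_441)
  moreover have "x \<in> D1 \<longleftrightarrow> x \<in> D2" if "x \<notin> {3, 7, 9, 49}" for x
    using assms(3,4) that by blast
  ultimately show "D1 = {1, 3} \<union> D1 \<inter> {21, 63, 147}" "D2 = {1, 7, 9, 49} \<union> D1 \<inter> {21, 63, 147}"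
    using assms(3-5) by auto
qed auto

theorem lemma3p26:
  fixes D1 D2 :: "nat set"
  assumes "D1 \<subseteq> divisors_of 441 - {441}"
      and "D2 \<subseteq> divisors_of 441 - {441}"
      and "D1 - D2 = {3}"
      and "D2 - D1 = {9, 7, 49}"
      and "1 \<in> D1 \<inter> D2"
  shows "Spec (ICG_adj 441 D1) \<noteq> Spec (ICG_adj 441 D2)"
proof
  assume "Spec (ICG_adj 441 D1) = Spec (ICG_adj 441 D2)"
  then have "trace (ICG_adj 441 D1 ^\<^sub>m 3) = trace (ICG_adj 441 D2 ^\<^sub>m 3)"
    by (simp add: trace_pow_mat_eq_sum_Spec[of _ 441] ICG_adj_def cay_adj_def)
  then have "gcd_triangles 441 D1 = gcd_triangles 441 D2"
    by (simp add: trace_cube_ICG_adj)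
  moreover obtain C where "C \<subseteq> {21, 63, 147}" "D1 = {1, 3} \<union> C" "D2 = {1, 7, 9, 49} \<union> C"
    using divisor_sets_441[OF assms] .
  ultimately show False
    using gcd_triangles_441 by simp
qed

end
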